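(* (a) Let $T_1,\dots,T_n$ be nonvertical affine hyperplanes ($d$-dimensional affine subspaces) of $\mathbb{E}^{d+1}$, no two parallel, and for $i<j$ let $h_{ij}$ be the vertical projection into $\mathbb{E}^d$ of $T_i\cap T_j$. For each $i$ let $Q_i\in\mathbb{E}^d$ be the point such that $Q_i^*$ is the unique point at which a translate of $T_i$ is tangent to $S$. Then $\{h_{ij}\}$ is the Pythagorean arrangement $\mathcal{H}(\Psi;Q_1,\dots,Q_n)$ for some balanced, complete real, additive gain graph $\Psi$ on $\{1,\dots,n\}$. (b) Conversely, let $\Phi$ be a balanced, complete real, additive gain graph on $n$ vertices and let $Q_1,\dots,Q_n$ be distinct points of $\mathbb{E}^d$. Then there exist affine hyperplanes $T_1,\dots,T_n$ of $\mathbb{E}^{d+1}$ such that $\mathcal{H}(\Phi;Q_1,\dots,Q_n)$ equals the arrangement $\{h_{ij}\}$ derived from $T_1,\dots,T_n$ as in (a).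
   Context: $\mathbb{E}^d$ is embedded in $\mathbb{E}^{d+1}$ as $\{z=0\}$, where points of $\mathbb{E}^{d+1}$ have coordinates $(x_1,\dots,x_d,z)$. The fundamental paraboloid is $S:\ z=x_1^2+\cdots+x_d^2$. For $P\in\mathbb{E}^d$, $P^*$ is its vertical projection (lift) into $S$; vertical projection into $\mathbb{E}^d$ forgets $z$. A real, additive gain graph on $\{1,\dots,n\}$: finite graph (multiple edges allowed, every edge with two distinct endpoints) with gains $\phi(e;i,j)\in\mathbb{R}$, $\phi(e;j,i)=-\phi(e;i,j)$; it is balanced if every circle has gain sum $0$ read consistently, and complete if every two vertices are adjacent. With $\psi_{ij}(P)=d(P,Q_i)^2-d(P,Q_j)^2$, the Pythagorean arrangement $\mathcal{H}(\Phi;\mathbf{Q})$ consists of the hyperplanes $h(e)=\{P\in\mathbb{E}^d:\psi_{ij}(P)=\phi(e;i,j)\}$, one per edge $e$ with endpoints $i,j$. *)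

theory Defs
  imports "HOL-Analysis.Analysis"
begin

text \<open>Points of E^d are \<open>real^'d\<close>; points of E^(d+1) are pairs \<open>(x, z)\<close> with
  \<open>x :: real^'d\<close> and \<open>z :: real\<close>.  Vertices of gain graphs are \<open>{1..n}\<close>.\<close>

type_synonym ('d) pt = "real^('d::finite)"
type_synonym ('d) upt = "(real^('d::finite)) \<times> real"

definition lift :: "('d::finite) pt \<Rightarrow> ('d::finite) upt" where
  "lift P = (P, (norm P)^2)"

definition paraboloid :: "('d::finite) upt set" where
  "paraboloid = {(x, z). z = (norm x)^2}"

definition affine_hyperplane :: "('d::finite) upt set \<Rightarrow> bool" where
  "affine_hyperplane T \<longleftrightarrow> affine T \<and> aff_dim T = int CARD('d)"

definition nonvertical :: "('d::finite) upt set \<Rightarrow> bool" where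
  "nonvertical T \<longleftrightarrow> (\<forall>p\<in>T. \<forall>t::real. (fst p, snd p + t) \<in> T \<longrightarrow> t = 0)"

definition translate :: "('d::finite) upt \<Rightarrow> ('d::finite) upt set \<Rightarrow> ('d::finite) upt set" where
  "translate v T = (\<lambda>p. p + v) ` T"

definition parallel :: "('d::finite) upt set \<Rightarrow> ('d::finite) upt set \<Rightarrow> bool" where
  "parallel T U \<longleftrightarrow> (\<exists>v. U = translate v T)"

definition tangent_hyperplane :: "('d::finite) pt \<Rightarrow> ('d::finite) upt set" where
  "tangent_hyperplane Q = {(x, z). z = (norm Q)^2 + 2 * (Q \<bullet> (x - Q))}"

definition tangent_point :: "('d::finite) upt set \<Rightarrow> ('d::finite) pt \<Rightarrow> bool" where
  "tangent_point T Q \<longleftrightarrow> lift Q \<in> paraboloid \<and> (\<exists>v. translate v T = tangent_hyperplane Q)"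

definition vproj :: "('d::finite) upt set \<Rightarrow> ('d::finite) pt set" where
  "vproj A = fst ` A"

definition derived_arrangement :: "nat \<Rightarrow> (nat \<Rightarrow> ('d::finite) upt set) \<Rightarrow> ('d::finite) pt set set" where
  "derived_arrangement n T =
     {vproj (T i \<inter> T j) | i j. 1 \<le> i \<and> i < j \<and> j \<le> n}"

text \<open>Gain graphs: edge set \<open>E\<close>, each edge \<open>e\<close> has an ordered pair of endpoints
  \<open>ends e = (i, j)\<close> and gain \<open>g e = \<phi>(e;i,j)\<close>; then \<open>\<phi>(e;j,i) = - g e\<close>.\<close>
definition gain_graph :: "nat \<Rightarrow> 'e set \<Rightarrow> ('e \<Rightarrow> nat \<times> nat) \<Rightarrow> bool" where
  "gain_graph n E ends \<longleftrightarrow> finite E \<and>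
     (\<forall>e\<in>E. fst (ends e) \<noteq> snd (ends e) \<and> fst (ends e) \<in> {1..n} \<and> snd (ends e) \<in> {1..n})"

definition joins :: "('e \<Rightarrow> nat \<times> nat) \<Rightarrow> 'e \<Rightarrow> nat \<Rightarrow> nat \<Rightarrow> bool" where
  "joins ends e i j \<longleftrightarrow> ends e = (i, j) \<or> ends e = (j, i)"

definition gain :: "('e \<Rightarrow> nat \<times> nat) \<Rightarrow> ('e \<Rightarrow> real) \<Rightarrow> 'e \<Rightarrow> nat \<Rightarrow> nat \<Rightarrow> real" where
  "gain ends g e i j = (if ends e = (i, j) then g e else if ends e = (j, i) then - g e else 0)"

definition is_circle :: "'e set \<Rightarrow> ('e \<Rightarrow> nat \<times> nat) \<Rightarrow> nat list \<Rightarrow> 'e list \<Rightarrow> bool" where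
  "is_circle E ends vs es \<longleftrightarrow> length es = length vs \<and> 2 \<le> length vs \<and>
     distinct vs \<and> distinct es \<and> set es \<subseteq> E \<and>
     (\<forall>k < length vs. joins ends (es ! k) (vs ! k) (vs ! (Suc k mod length vs)))"

definition balanced :: "'e set \<Rightarrow> ('e \<Rightarrow> nat \<times> nat) \<Rightarrow> ('e \<Rightarrow> real) \<Rightarrow> bool" where
  "balanced E ends g \<longleftrightarrow> (\<forall>vs es. is_circle E ends vs es \<longrightarrow>
     (\<Sum>k < length vs. gain ends g (es ! k) (vs ! k) (vs ! (Suc k mod length vs))) = 0)"

definition complete_gg :: "nat \<Rightarrow> 'e set \<Rightarrow> ('e \<Rightarrow> nat \<times> nat) \<Rightarrow> bool" where
  "complete_gg n E ends \<longleftrightarrow> (\<forall>i\<in>{1..n}. \<forall>j\<in>{1..n}. i \<noteq> j \<longrightarrow> (\<exists>e\<in>E. joins ends e i j))"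

definition psi :: "(nat \<Rightarrow> ('d::finite) pt) \<Rightarrow> nat \<Rightarrow> nat \<Rightarrow> ('d::finite) pt \<Rightarrow> real" where
  "psi Q i j P = (dist P (Q i))^2 - (dist P (Q j))^2"

definition pyth_arrangement :: "'e set \<Rightarrow> ('e \<Rightarrow> nat \<times> nat) \<Rightarrow> ('e \<Rightarrow> real) \<Rightarrow> (nat \<Rightarrow> ('d::finite) pt) \<Rightarrow> ('d::finite) pt set set" where
  "pyth_arrangement E ends g Q =
     {{P. psi Q (fst (ends e)) (snd (ends e)) P = g e} | e. e \<in> E}"

end

theory Submission
  imports Defs
begin

text \<open>A hyperplane whose tangent point is \<open>Q\<close> is the tangent hyperplane of the paraboloid at
  \<open>Q\<^sup>*\<close> raised by some height \<open>k\<close>, i.e. \<open>z = 2 Q\<bullet>x - |Q|\<^sup>2 + k\<close>. Two such hyperplanes meet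
  exactly above the points where \<open>2 Q\<^sub>i\<bullet>x - |Q\<^sub>i|\<^sup>2 + k\<^sub>i = 2 Q\<^sub>j\<bullet>x - |Q\<^sub>j|\<^sup>2 + k\<^sub>j\<close>, that is, where
  \<open>\<psi>\<^sub>i\<^sub>j(x) = k\<^sub>i - k\<^sub>j\<close>. Hence derived arrangements are the Pythagorean arrangements whose gains
  are differences of a potential \<open>k\<close>, and for a complete gain graph having such a potential is
  the same as being balanced: potential differences telescope to zero around every circle, and
  conversely the gains of the edges to a fixed root vertex define a potential.\<close>

definition shifted_tangent_hyperplane :: "('d::finite) pt \<Rightarrow> real \<Rightarrow> ('d::finite) upt set" where
  "shifted_tangent_hyperplane Q k = {(x, z). z = 2 * (Q \<bullet> x) - (norm Q)^2 + k}"

lemma mem_shifted_tangent_hyperplane [simp]: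
  "(x, z) \<in> shifted_tangent_hyperplane Q k \<longleftrightarrow> z = 2 * (Q \<bullet> x) - (norm Q)^2 + k"
  by (simp add: shifted_tangent_hyperplane_def)

lemma tangent_hyperplane_eq_shifted: "tangent_hyperplane Q = shifted_tangent_hyperplane Q 0"
  by (auto simp: tangent_hyperplane_def shifted_tangent_hyperplane_def inner_diff_right
      power2_norm_eq_inner)

lemma mem_translate_iff: "p \<in> translate v T \<longleftrightarrow> p - v \<in> T"
proof
  assume "p \<in> translate v T"
  then obtain q where "q \<in> T" "p = q + v"
    unfolding translate_def by blast
  then show "p - v \<in> T" by simp
next
  assume "p - v \<in> T"
  then have "p - v + v \<in> translate v T"
    unfolding translate_def by (rule imageI)
  then show "p \<in> translate v T" by simp
qed

lemma translate_shifted_tangent_hyperplane: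
  "translate (a, b) (shifted_tangent_hyperplane Q k) =
   shifted_tangent_hyperplane Q (k + b - 2 * (Q \<bullet> a))"
  by (auto simp: mem_translate_iff inner_diff_right algebra_simps)

lemma tangent_point_iff: "tangent_point T Q \<longleftrightarrow> (\<exists>k. T = shifted_tangent_hyperplane Q k)"
proof
  assume "tangent_point T Q"
  then obtain a b where ab: "translate (a, b) T = shifted_tangent_hyperplane Q 0"
    unfolding tangent_point_def tangent_hyperplane_eq_shifted by auto
  have "T = translate (- a, - b) (translate (a, b) T)"
    by (auto simp: mem_translate_iff)
  then show "\<exists>k. T = shifted_tangent_hyperplane Q k"
    unfolding ab translate_shifted_tangent_hyperplane by blast
next
  assume "\<exists>k. T = shifted_tangent_hyperplane Q k"
  then obtain k where "T = shifted_tangent_hyperplane Q k" ..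
  then have "translate (0, - k) T = tangent_hyperplane Q"
    by (simp add: translate_shifted_tangent_hyperplane tangent_hyperplane_eq_shifted)
  then show "tangent_point T Q"
    unfolding tangent_point_def lift_def paraboloid_def by blast
qed

lemma affine_hyperplane_shifted_tangent_hyperplane:
  "affine_hyperplane (shifted_tangent_hyperplane (Q::('d::finite) pt) k)"
proof -
  let ?f = "\<lambda>x::('d::finite) pt. (x, 2 * (Q \<bullet> x))"
  have lin: "linear ?f"
    by (rule linearI) (auto simp: algebra_simps)
  have inj: "inj ?f"
    by (auto simp: inj_on_def)
  have eq: "shifted_tangent_hyperplane Q k = (+) (0, k - (norm Q)^2) ` range ?f"
    by (auto simp: shifted_tangent_hyperplane_def image_iff)
  have "affine (range ?f)"
    by (intro subspace_imp_affine linear_subspace_image lin subspace_UNIV)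
  then show ?thesis
    unfolding affine_hyperplane_def eq
    by (simp add: aff_dim_translation_eq lin inj flip: affine_translation)
qed

lemma nonvertical_shifted_tangent_hyperplane: "nonvertical (shifted_tangent_hyperplane Q k)"
  by (auto simp: nonvertical_def shifted_tangent_hyperplane_def)

lemma shifted_tangent_hyperplane_eqD:
  assumes "shifted_tangent_hyperplane Q k = shifted_tangent_hyperplane Q' k'"
  shows "Q = Q'"
proof -
  have level: "2 * (Q \<bullet> x) - (norm Q)^2 + k = 2 * (Q' \<bullet> x) - (norm Q')^2 + k'" for x
  proof -
    have "(x, 2 * (Q \<bullet> x) - (norm Q)^2 + k) \<in> shifted_tangent_hyperplane Q' k'"
      unfolding assms[symmetric] by simp
    then show ?thesis by simp
  qed
  have "(Q - Q') \<bullet> (Q - Q') = 0"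
    using level[of "Q - Q'"] level[of 0] by (simp add: inner_diff_left inner_diff_right inner_commute)
  then show ?thesis by simp
qed

lemma not_parallel_shifted_tangent_hyperplane:
  assumes "Q \<noteq> Q'"
  shows "\<not> parallel (shifted_tangent_hyperplane Q k) (shifted_tangent_hyperplane Q' k')"
proof
  assume "parallel (shifted_tangent_hyperplane Q k) (shifted_tangent_hyperplane Q' k')"
  then obtain a b where "shifted_tangent_hyperplane Q' k' = translate (a, b) (shifted_tangent_hyperplane Q k)"
    unfolding parallel_def by auto
  then have "Q' = Q"
    unfolding translate_shifted_tangent_hyperplane by (rule shifted_tangent_hyperplane_eqD)
  with assms show False by simp
qed

lemma vproj_Int_shifted_tangent_hyperplane:
  "vproj (shifted_tangent_hyperplane (Q i) a \<inter> shifted_tangent_hyperplane (Q j) b) =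
   {P. psi Q i j P = a - b}"
proof (rule set_eqI)
  fix P
  have "psi Q i j P = 2 * (Q j \<bullet> P) - 2 * (Q i \<bullet> P) + (norm (Q i))^2 - (norm (Q j))^2"
    unfolding psi_def dist_norm power2_norm_eq_inner
    by (simp add: inner_diff_left inner_diff_right inner_commute algebra_simps)
  moreover have "P \<in> vproj (shifted_tangent_hyperplane (Q i) a \<inter> shifted_tangent_hyperplane (Q j) b) \<longleftrightarrow>
      2 * (Q i \<bullet> P) - (norm (Q i))^2 + a = 2 * (Q j \<bullet> P) - (norm (Q j))^2 + b"
    unfolding vproj_def shifted_tangent_hyperplane_def by (force simp: image_iff)
  ultimately show "P \<in> vproj (shifted_tangent_hyperplane (Q i) a \<inter> shifted_tangent_hyperplane (Q j) b) \<longleftrightarrow>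
      P \<in> {P. psi Q i j P = a - b}"
    by auto
qed

lemma psi_swap: "psi Q j i P = - psi Q i j P"
  unfolding psi_def by simp

lemma sum_cyclic_telescope:
  assumes "0 < m"
  shows "(\<Sum>t<m. c t - c (Suc t mod m)) = (0::'a::ab_group_add)"
proof -
  let ?c = "\<lambda>t. if t = m then c 0 else c t"
  have "(\<Sum>t<m. c t - c (Suc t mod m)) = (\<Sum>t<m. ?c t - ?c (Suc t))"
    by (rule sum.cong) (auto simp: mod_Suc)
  also have "\<dots> = ?c 0 - ?c m"
    by (rule sum_lessThan_telescope')
  finally show ?thesis
    using assms by simp
qed

lemma gain_swap: "joins ends e i j \<Longrightarrow> i \<noteq> j \<Longrightarrow> gain ends g e j i = - gain ends g e i j"
  unfolding gain_def joins_def by auto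

lemma joins_sym: "joins ends e i j \<longleftrightarrow> joins ends e j i"
  unfolding joins_def by auto

lemma gain_eq_potential_difference:
  assumes "g e = c (fst (ends e)) - c (snd (ends e))" "joins ends e i j"
  shows "gain ends g e i j = c i - c j"
  using assms unfolding gain_def joins_def by auto

lemma balanced_if_potential:
  assumes "\<forall>e\<in>E. g e = c (fst (ends e)) - c (snd (ends e))"
  shows "balanced E ends g"
  unfolding balanced_def
proof (intro allI impI)
  fix vs es assume circle: "is_circle E ends vs es"
  let ?m = "length vs"
  have "(\<Sum>t<?m. gain ends g (es ! t) (vs ! t) (vs ! (Suc t mod ?m))) =
        (\<Sum>t<?m. c (vs ! t) - c (vs ! (Suc t mod ?m)))"
    using circle assms
    by (intro sum.cong refl gain_eq_potential_difference) (force simp: is_circle_def intro: nth_mem)+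
  also have "\<dots> = 0"
    using circle by (intro sum_cyclic_telescope) (auto simp: is_circle_def)
  finally show "(\<Sum>t<?m. gain ends g (es ! t) (vs ! t) (vs ! (Suc t mod ?m))) = 0" .
qed

lemma balanced_parallel_edges:
  assumes bal: "balanced E ends g" and "e \<in> E" "e' \<in> E" "a \<noteq> b"
    and joins: "joins ends e a b" "joins ends e' a b"
  shows "gain ends g e a b = gain ends g e' a b"
proof (cases "e = e'")
  case False
  have "is_circle E ends [a, b] [e, e']"
    using assms False by (auto simp: is_circle_def less_Suc_eq numeral_2_eq_2 joins_def)
  then have "gain ends g e a b + gain ends g e' b a = 0"
    using bal unfolding balanced_def by (fastforce simp: numeral_2_eq_2)
  then show ?thesis
    using gain_swap[OF joins(2) \<open>a \<noteq> b\<close>] by simp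
qed simp

lemma balanced_triangle:
  assumes bal: "balanced E ends g" and "e1 \<in> E" "e2 \<in> E" "e3 \<in> E"
    and "a \<noteq> b" "b \<noteq> c" "a \<noteq> c"
    and "joins ends e1 a b" "joins ends e2 b c" "joins ends e3 c a"
  shows "gain ends g e1 a b + gain ends g e2 b c + gain ends g e3 c a = 0"
proof -
  have "distinct [e1, e2, e3]"
    using assms unfolding joins_def by auto
  moreover have "joins ends ([e1, e2, e3] ! k) ([a, b, c] ! k) ([a, b, c] ! (Suc k mod 3))"
    if "k < 3" for k
  proof -
    have "k = 0 \<or> k = 1 \<or> k = 2"
      using that by linarith
    then show ?thesis
      using assms by auto
  qed
  ultimately have "is_circle E ends [a, b, c] [e1, e2, e3]"
    using assms unfolding is_circle_def by simp
  then have "(\<Sum>k<length [a, b, c].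
      gain ends g ([e1, e2, e3] ! k) ([a, b, c] ! k) ([a, b, c] ! (Suc k mod length [a, b, c]))) = 0"
    using bal unfolding balanced_def by blast
  moreover have "(\<Sum>k<length [a, b, c]. f k) = f 0 + f 1 + (f 2 :: real)" for f
    by (simp add: numeral_3_eq_3 numeral_2_eq_2)
  ultimately show ?thesis
    by simp
qed

lemma balanced_complete_imp_potential:
  assumes gg: "gain_graph n E ends" and bal: "balanced E ends g" and cp: "complete_gg n E ends"
  shows "\<exists>c. \<forall>e\<in>E. g e = c (fst (ends e)) - c (snd (ends e))"
proof -
  have edge: "\<exists>e\<in>E. joins ends e i j" if "i \<in> {1..n}" "j \<in> {1..n}" "i \<noteq> j" for i j
    using cp that unfolding complete_gg_def by blast
  define c where "c i = (if i = 1 then 0 else gain ends g (SOME e. e \<in> E \<and> joins ends e i 1) i 1)"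
    for i
  \<comment> \<open>well defined by balanced 2-circles; a potential by balanced triangles through the root\<close>
  have to_root: "gain ends g e a 1 = c a"
    if "e \<in> E" "joins ends e a 1" "a \<in> {1..n}" "a \<noteq> 1" for e a
  proof -
    let ?e = "SOME e. e \<in> E \<and> joins ends e a 1"
    have "\<exists>e. e \<in> E \<and> joins ends e a 1"
      using edge[of a 1] that by auto
    then have "?e \<in> E \<and> joins ends ?e a 1"
      by (rule someI_ex)
    then have "gain ends g e a 1 = gain ends g ?e a 1"
      using balanced_parallel_edges[OF bal \<open>e \<in> E\<close> _ \<open>a \<noteq> 1\<close> \<open>joins ends e a 1\<close>] by blast
    then show ?thesis
      using \<open>a \<noteq> 1\<close> by (simp add: c_def)
  qed
  have potential: "gain ends g e a b = c a - c b"
    if e: "e \<in> E" "joins ends e a b" and ab: "a \<noteq> b" "a \<in> {1..n}" "b \<in> {1..n}" for e a b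
  proof -
    consider "b = 1" | "a = 1" | "a \<noteq> 1" "b \<noteq> 1"
      by blast
    then show ?thesis
    proof cases
      case 1
      then show ?thesis
        using to_root e ab by (simp add: c_def)
    next
      case 2
      have "joins ends e b 1"
        using e(2) 2 joins_sym by metis
      then have "gain ends g e b a = c b"
        using to_root[of e b] e(1) ab 2 by simp
      then show ?thesis
        using gain_swap[OF e(2) ab(1)] 2 by (simp add: c_def)
    next
      case 3
      obtain ea eb where ea: "ea \<in> E" "joins ends ea a 1" and eb: "eb \<in> E" "joins ends eb b 1"
        using edge[of a 1] edge[of b 1] ab 3 by auto
      have "gain ends g e a b + gain ends g eb b 1 + gain ends g ea 1 a = 0"
        using balanced_triangle[OF bal e(1) eb(1) ea(1) ab(1) 3(2) 3(1) e(2) eb(2)]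
          joins_sym[THEN iffD1, OF ea(2)] .
      then show ?thesis
        using to_root[OF ea] to_root[OF eb] gain_swap[OF ea(2) 3(1)] ab 3 by simp
    qed
  qed
  have "g e = c (fst (ends e)) - c (snd (ends e))" if "e \<in> E" for e
    using potential[OF that, of "fst (ends e)" "snd (ends e)"] that gg
    by (simp add: gain_graph_def gain_def joins_def)
  then show ?thesis by blast
qed

lemma complete_gain_graph_exists: "\<exists>(E::nat set) ends. gain_graph n E ends \<and> complete_gg n E ends"
proof -
  let ?E = "prod_encode ` {(i, j). 1 \<le> i \<and> i < j \<and> j \<le> n}"
  have "finite {(i, j). 1 \<le> i \<and> i < j \<and> j \<le> n}"
    by (rule finite_subset[of _ "{1..n} \<times> {1..n}"]) auto
  then have "gain_graph n ?E prod_decode"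
    unfolding gain_graph_def by auto
  moreover have "complete_gg n ?E prod_decode"
    unfolding complete_gg_def joins_def by (force simp: image_iff linorder_neq_iff)
  ultimately show ?thesis by blast
qed

definition potential_arrangement :: "nat \<Rightarrow> (nat \<Rightarrow> ('d::finite) pt) \<Rightarrow> (nat \<Rightarrow> real) \<Rightarrow> ('d::finite) pt set set" where
  "potential_arrangement n Q c = {{P. psi Q i j P = c i - c j} | i j. 1 \<le> i \<and> i < j \<and> j \<le> n}"

lemma derived_arrangement_eq_potential_arrangement:
  assumes "\<forall>i\<in>{1..n}. T i = shifted_tangent_hyperplane (Q i) (c i)"
  shows "derived_arrangement n T = potential_arrangement n Q c"
  unfolding derived_arrangement_def potential_arrangement_def
proof (intro Collect_cong ex_cong1)
  fix X i j
  show "(X = vproj (T i \<inter> T j) \<and> 1 \<le> i \<and> i < j \<and> j \<le> n) \<longleftrightarrow>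
        (X = {P. psi Q i j P = c i - c j} \<and> 1 \<le> i \<and> i < j \<and> j \<le> n)"
    using assms vproj_Int_shifted_tangent_hyperplane[of Q i "c i" j "c j"] by auto
qed

lemma pyth_arrangement_eq_potential_arrangement:
  assumes gg: "gain_graph n E ends" and cp: "complete_gg n E ends"
    and pot: "\<forall>e\<in>E. g e = c (fst (ends e)) - c (snd (ends e))"
  shows "pyth_arrangement E ends g Q = potential_arrangement n Q c"
proof -
  have level_set: "{P. psi Q (fst (ends e)) (snd (ends e)) P = g e} = {P. psi Q i j P = c i - c j}"
    if "e \<in> E" "joins ends e i j" for e i j
    using that pot psi_swap[of Q j i] unfolding joins_def by fastforce
  show ?thesis
  proof (rule set_eqI)
    fix X
    show "X \<in> pyth_arrangement E ends g Q \<longleftrightarrow> X \<in> potential_arrangement n Q c"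
    proof
      assume "X \<in> pyth_arrangement E ends g Q"
      then obtain e where e: "e \<in> E" and X: "X = {P. psi Q (fst (ends e)) (snd (ends e)) P = g e}"
        unfolding pyth_arrangement_def by blast
      obtain a b where ab: "ends e = (a, b)"
        by fastforce
      have "a \<noteq> b" "a \<in> {1..n}" "b \<in> {1..n}"
        using gg e ab unfolding gain_graph_def by auto
      then consider "1 \<le> a" "a < b" "b \<le> n" | "1 \<le> b" "b < a" "a \<le> n"
        by fastforce
      then show "X \<in> potential_arrangement n Q c"
      proof cases
        case 1
        have "X = {P. psi Q a b P = c a - c b}"
          using X level_set[OF e, of a b] ab by (simp add: joins_def)
        then show ?thesis
          using 1 unfolding potential_arrangement_def by blast
      next
        case 2
        have "X = {P. psi Q b a P = c b - c a}"
          using X level_set[OF e, of b a] ab by (simp add: joins_def)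
        then show ?thesis
          using 2 unfolding potential_arrangement_def by blast
      qed
    next
      assume "X \<in> potential_arrangement n Q c"
      then obtain i j where ij: "1 \<le> i" "i < j" "j \<le> n" and X: "X = {P. psi Q i j P = c i - c j}"
        unfolding potential_arrangement_def by blast
      then obtain e where "e \<in> E" "joins ends e i j"
        using cp unfolding complete_gg_def by (metis atLeastAtMost_iff less_imp_le order.strict_trans2 nat_neq_iff)
      then show "X \<in> pyth_arrangement E ends g Q"
        using level_set X unfolding pyth_arrangement_def by blast
    qed
  qed
qed

lemma derived_arrangement_is_pythagorean:
  fixes T :: "nat \<Rightarrow> ('d::finite) upt set" and Q :: "nat \<Rightarrow> ('d::finite) pt"
  assumes "\<forall>i\<in>{1..n}. tangent_point (T i) (Q i)"
  shows "\<exists>(E::nat set) ends g. gain_graph n E ends \<and> balanced E ends g \<and> complete_gg n E ends \<and>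
           derived_arrangement n T = pyth_arrangement E ends g Q"
proof -
  obtain c where c: "\<forall>i\<in>{1..n}. T i = shifted_tangent_hyperplane (Q i) (c i)"
    using assms unfolding tangent_point_iff by metis
  obtain E :: "nat set" and ends where gg: "gain_graph n E ends" and cp: "complete_gg n E ends"
    using complete_gain_graph_exists by blast
  define g where "g e = c (fst (ends e)) - c (snd (ends e))" for e
  have pot: "\<forall>e\<in>E. g e = c (fst (ends e)) - c (snd (ends e))"
    by (simp add: g_def)
  show ?thesis
    using gg cp balanced_if_potential[OF pot] derived_arrangement_eq_potential_arrangement[OF c]
      pyth_arrangement_eq_potential_arrangement[OF gg cp pot] by metis
qed

lemma pythagorean_arrangement_is_derived:
  fixes Q :: "nat \<Rightarrow> ('d::finite) pt" and E :: "'e set"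
  assumes gg: "gain_graph n E ends" and bal: "balanced E ends g" and cp: "complete_gg n E ends"
    and inj: "inj_on Q {1..n}"
  shows "\<exists>T::nat \<Rightarrow> ('d::finite) upt set.
           (\<forall>i\<in>{1..n}. affine_hyperplane (T i) \<and> nonvertical (T i) \<and> tangent_point (T i) (Q i)) \<and>
           (\<forall>i\<in>{1..n}. \<forall>j\<in>{1..n}. i \<noteq> j \<longrightarrow> \<not> parallel (T i) (T j)) \<and>
           pyth_arrangement E ends g Q = derived_arrangement n T"
proof -
  obtain c where pot: "\<forall>e\<in>E. g e = c (fst (ends e)) - c (snd (ends e))"
    using balanced_complete_imp_potential[OF gg bal cp] by blast
  define T where "T i = shifted_tangent_hyperplane (Q i) (c i)" for i
  have "\<forall>i\<in>{1..n}. affine_hyperplane (T i) \<and> nonvertical (T i) \<and> tangent_point (T i) (Q i)"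
    unfolding T_def tangent_point_iff
    using affine_hyperplane_shifted_tangent_hyperplane nonvertical_shifted_tangent_hyperplane by blast
  moreover have "\<forall>i\<in>{1..n}. \<forall>j\<in>{1..n}. i \<noteq> j \<longrightarrow> \<not> parallel (T i) (T j)"
    using inj unfolding T_def inj_on_def by (metis not_parallel_shifted_tangent_hyperplane)
  moreover have "pyth_arrangement E ends g Q = derived_arrangement n T"
    using pyth_arrangement_eq_potential_arrangement[OF gg cp pot]
      derived_arrangement_eq_potential_arrangement[of n T Q c] by (simp add: T_def)
  ultimately show ?thesis by blast
qed

theorem proposition9p2:
  shows
  "(\<forall>(n::nat) (T::nat \<Rightarrow> ('d::finite) upt set) (Q::nat \<Rightarrow> ('d::finite) pt).
      (\<forall>i\<in>{1..n}. affine_hyperplane (T i) \<and> nonvertical (T i) \<and> tangent_point (T i) (Q i)) \<and>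
      (\<forall>i\<in>{1..n}. \<forall>j\<in>{1..n}. i \<noteq> j \<longrightarrow> \<not> parallel (T i) (T j))
      \<longrightarrow> (\<exists>(E::nat set) ends g. gain_graph n E ends \<and> balanced E ends g \<and> complete_gg n E ends \<and>
             derived_arrangement n T = pyth_arrangement E ends g Q))
   \<and>
   (\<forall>(n::nat) (E::'e set) ends g (Q::nat \<Rightarrow> ('d::finite) pt).
      gain_graph n E ends \<and> balanced E ends g \<and> complete_gg n E ends \<and> inj_on Q {1..n}
      \<longrightarrow> (\<exists>T::nat \<Rightarrow> ('d::finite) upt set.
             (\<forall>i\<in>{1..n}. affine_hyperplane (T i) \<and> nonvertical (T i) \<and> tangent_point (T i) (Q i)) \<and>
             (\<forall>i\<in>{1..n}. \<forall>j\<in>{1..n}. i \<noteq> j \<longrightarrow> \<not> parallel (T i) (T j)) \<and>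
             pyth_arrangement E ends g Q = derived_arrangement n T))"
proof (intro conjI allI impI)
  fix n and T :: "nat \<Rightarrow> ('d::finite) upt set" and Q :: "nat \<Rightarrow> ('d::finite) pt"
  assume "(\<forall>i\<in>{1..n}. affine_hyperplane (T i) \<and> nonvertical (T i) \<and> tangent_point (T i) (Q i)) \<and>
    (\<forall>i\<in>{1..n}. \<forall>j\<in>{1..n}. i \<noteq> j \<longrightarrow> \<not> parallel (T i) (T j))"
  then show "\<exists>(E::nat set) ends g. gain_graph n E ends \<and> balanced E ends g \<and> complete_gg n E ends \<and>
      derived_arrangement n T = pyth_arrangement E ends g Q"
    by (intro derived_arrangement_is_pythagorean) blast
qed (intro pythagorean_arrangement_is_derived; blast)

end
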